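(* Let $\alpha\ge-1$ and $m,n\in\mathbb{N}$ with $m=m_1+\dots+m_k$ and $n=n_1+\dots+n_k$, where $m_j\in\mathbb{N}_0$ and $n_j\in\mathbb{N}$ for $j=1,\dots,k$. Put $s=\frac mn+1$, $N=m+n$, $N_j=m_j+n_j$, $s_j=\frac{m_j}{n_j}+1$. Then there is a constant $C>0$ independent of $g$ such that $$\|g\|^N_{\mathscr{B}^s_\alpha}\le C\,\|g\|^{N_1}_{\mathscr{B}^{s_1}_\alpha}\cdots\|g\|^{N_k}_{\mathscr{B}^{s_k}_\alpha}\qquad(g\in\mathcal{H}(\mathbb{D})).$$
   Context: $\mathbb{D}$ is the unit disc, $\mathcal{H}(\mathbb{D})$ the analytic functions on it, $dA$ normalized area measure. For $\psi:\mathbb{D}\to\mathbb{R}$, $|\nabla\psi|(z)=\limsup_{w\to z}|\psi(w)-\psi(z)|/|w-z|$. Let $\phi_a(z)=\frac{a-z}{1-\bar a z}$. For $q\ge1$, $\|g\|_{\mathscr{B}^q}^q=\sup_{z\in\mathbb{D}}(1-|z|^2)|\nabla|g|^q|(z)$ and $\|g\|_{BMOA^q}^{2q}=\sup_{a\in\mathbb{D}}\int_{\mathbb{D}}(1-|\phi_a|^2)|\nabla|g|^q|^2\,dA$. Write $\|\cdot\|_{\mathscr{B}^q_\alpha}=\|\cdot\|_{\mathscr{B}^q}$ for $\alpha>-1$ and $\|\cdot\|_{\mathscr{B}^q_{-1}}=\|\cdot\|_{BMOA^q}$ (values in $[0,\infty]$). *)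

theory Defs
  imports "HOL-Analysis.Analysis"
begin

abbreviation unit_disc :: "complex set" where "unit_disc \<equiv> ball 0 1"

text \<open>Positive real powers on [0,\<infinity>] (exponent assumed positive): \<infinity>^p = \<infinity>.\<close>
definition enn_powr :: "ennreal \<Rightarrow> real \<Rightarrow> ennreal" where
  "enn_powr x p = (if x = \<infinity> then \<infinity> else ennreal (enn2real x powr p))"

definition grad_abs :: "(complex \<Rightarrow> real) \<Rightarrow> complex \<Rightarrow> ennreal" where
  "grad_abs \<psi> z = Limsup (at z) (\<lambda>w. ennreal (\<bar>\<psi> w - \<psi> z\<bar> / cmod (w - z)))"

definition mobius :: "complex \<Rightarrow> complex \<Rightarrow> complex" where
  "mobius a z = (a - z) / (1 - cnj a * z)"

definition area_int :: "(complex \<Rightarrow> ennreal) \<Rightarrow> ennreal" where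
  "area_int f = (\<integral>\<^sup>+ z. f z * indicator unit_disc z \<partial>lborel) / ennreal pi"

definition bloch_q_pow :: "real \<Rightarrow> (complex \<Rightarrow> complex) \<Rightarrow> ennreal" where
  "bloch_q_pow q g = (SUP z\<in>unit_disc. ennreal (1 - (cmod z)\<^sup>2) * grad_abs (\<lambda>w. cmod (g w) powr q) z)"

definition bloch_q_norm :: "real \<Rightarrow> (complex \<Rightarrow> complex) \<Rightarrow> ennreal" where
  "bloch_q_norm q g = enn_powr (bloch_q_pow q g) (1 / q)"

definition bmoa_q_pow :: "real \<Rightarrow> (complex \<Rightarrow> complex) \<Rightarrow> ennreal" where
  "bmoa_q_pow q g = (SUP a\<in>unit_disc. area_int (\<lambda>z. ennreal (1 - (cmod (mobius a z))\<^sup>2)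
       * (grad_abs (\<lambda>w. cmod (g w) powr q) z)\<^sup>2))"

definition bmoa_q_norm :: "real \<Rightarrow> (complex \<Rightarrow> complex) \<Rightarrow> ennreal" where
  "bmoa_q_norm q g = enn_powr (bmoa_q_pow q g) (1 / (2 * q))"

definition B_alpha_norm :: "real \<Rightarrow> real \<Rightarrow> (complex \<Rightarrow> complex) \<Rightarrow> ennreal" where
  "B_alpha_norm \<alpha> q g = (if \<alpha> = -1 then bmoa_q_norm q g else bloch_q_norm q g)"

end

theory Submission
  imports Defs "HOL-Complex_Analysis.Complex_Analysis"
begin

text \<open>
  For holomorphic \<open>g\<close> and \<open>s = m/n + 1\<close> the slope of \<open>|g|\<^sup>s\<close> is \<open>s |g|\<^bsup>m/n\<^esup> |g'|\<close>.
  With the weights \<open>\<theta>\<^sub>j = n\<^sub>j/n\<close>, which sum to 1, one has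
  \<open>|g|\<^bsup>m/n\<^esup> |g'| = \<Prod>\<^sub>j (|g|\<^bsup>m\<^sub>j/n\<^sub>j\<^esup> |g'|)\<^bsup>\<theta>\<^sub>j\<^esup>\<close>, so pointwise
  \<open>|\<nabla>|g|\<^sup>s| = c \<Prod>\<^sub>j |\<nabla>|g|\<^bsup>s\<^sub>j\<^esup>|\<^bsup>\<theta>\<^sub>j\<^esup>\<close> with \<open>c = s / \<Prod>\<^sub>j s\<^sub>j\<^bsup>\<theta>\<^sub>j\<^esup>\<close>.
  Splitting the weight \<open>1 - |z|\<^sup>2\<close> into its \<open>\<theta>\<^sub>j\<close>-th powers and taking suprema gives the
  Bloch case; in the BMOA case the squared identity is integrated against
  \<open>(1 - |\<phi>\<^sub>a|\<^sup>2) dA\<close> and Hoelder's inequality with exponents \<open>1/\<theta>\<^sub>j\<close> is applied.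
  Since \<open>(m + n)/s = n\<close> and \<open>(m\<^sub>j + n\<^sub>j)/s\<^sub>j = n\<^sub>j\<close>, raising to the power \<open>n\<close> yields the
  theorem with \<open>C = c\<^sup>n\<close>.
\<close>

section \<open>Real powers of extended nonnegative reals\<close>

lemma enn_powr_ennreal: "0 \<le> x \<Longrightarrow> enn_powr (ennreal x) p = ennreal (x powr p)"
  by (simp add: enn_powr_def)

lemma enn_powr_top [simp]: "enn_powr top p = top"
  by (simp add: enn_powr_def)

lemma enn_powr_zero [simp]: "enn_powr 0 p = 0"
  by (simp add: enn_powr_def)

lemma enn_powr_one_left [simp]: "enn_powr 1 p = 1"
  by (simp add: enn_powr_def)

lemma enn_powr_eq_0_iff: "enn_powr x p = 0 \<longleftrightarrow> x = 0"
  by (cases x rule: ennreal_cases) (auto simp: enn_powr_ennreal)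

lemma enn_powr_one [simp]: "enn_powr x 1 = x"
  by (cases x rule: ennreal_cases) (auto simp: enn_powr_ennreal)

lemma enn_powr_add: "enn_powr x p * enn_powr x q = enn_powr x (p + q)"
  by (cases x rule: ennreal_cases) (auto simp: enn_powr_ennreal ennreal_mult' powr_add)

lemma enn_powr_mult:
  assumes "0 < p" shows "enn_powr (x * y) p = enn_powr x p * enn_powr y p"
proof (cases x rule: ennreal_cases)
  case (real a)
  then show ?thesis
    using assms
    by (cases y rule: ennreal_cases)
       (auto simp: enn_powr_ennreal ennreal_mult[symmetric] powr_mult ennreal_mult_top ennreal_top_mult)
next
  case top
  then show ?thesis
    using assms by (cases y rule: ennreal_cases) (auto simp: enn_powr_ennreal ennreal_top_mult)
qed

lemma enn_powr_power:
  assumes "0 < n" shows "enn_powr x p ^ n = enn_powr x (p * real n)"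
proof (cases x rule: ennreal_cases)
  case (real a)
  have "(a powr p) ^ n = a powr (p * real n)"
    using assms by (cases "a = 0") (simp_all add: powr_power mult.commute)
  then show ?thesis using real by (simp add: enn_powr_ennreal ennreal_power)
qed (use assms in simp)

lemma enn_powr_powr: "enn_powr (enn_powr x p) q = enn_powr x (p * q)"
  by (cases x rule: ennreal_cases) (auto simp: enn_powr_ennreal powr_powr)

lemma enn_powr_mono: "x \<le> y \<Longrightarrow> 0 \<le> p \<Longrightarrow> enn_powr x p \<le> enn_powr y p"
  by (cases x rule: ennreal_cases; cases y rule: ennreal_cases)
     (auto simp: enn_powr_ennreal powr_mono2 ennreal_leI top_unique)

lemma enn_powr_sum:
  "finite I \<Longrightarrow> I \<noteq> {} \<Longrightarrow> enn_powr x (\<Sum>j\<in>I. \<theta> j) = (\<Prod>j\<in>I. enn_powr x (\<theta> j))"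
  by (induction I rule: finite_ne_induct) (simp_all add: enn_powr_add[symmetric])

lemma enn_powr_prod: "0 < p \<Longrightarrow> enn_powr (\<Prod>j\<in>I. x j) p = (\<Prod>j\<in>I. enn_powr (x j) p)"
  by (induction I rule: infinite_finite_induct) (simp_all add: enn_powr_mult)

lemma prod_enn_powr_mult_left:
  assumes "finite I" "I \<noteq> {}" "\<And>j. j \<in> I \<Longrightarrow> 0 < \<theta> j" "(\<Sum>j\<in>I. \<theta> j) = 1"
  shows "(\<Prod>j\<in>I. enn_powr (w * y j) (\<theta> j)) = w * (\<Prod>j\<in>I. enn_powr (y j) (\<theta> j))"
proof -
  have "(\<Prod>j\<in>I. enn_powr (w * y j) (\<theta> j)) = (\<Prod>j\<in>I. enn_powr w (\<theta> j)) * (\<Prod>j\<in>I. enn_powr (y j) (\<theta> j))"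
    using assms(3) by (simp add: enn_powr_mult prod.distrib)
  then show ?thesis using assms by (simp add: enn_powr_sum[symmetric])
qed

lemma prod_mono_ennreal:
  fixes f g :: "'a \<Rightarrow> ennreal"
  shows "(\<And>i. i \<in> A \<Longrightarrow> f i \<le> g i) \<Longrightarrow> prod f A \<le> prod g A"
  by (induction A rule: infinite_finite_induct) (auto intro!: mult_mono)

lemma prod_enn_powr_mono:
  "(\<And>j. j \<in> I \<Longrightarrow> x j \<le> y j) \<Longrightarrow> (\<And>j. j \<in> I \<Longrightarrow> 0 \<le> \<theta> j) \<Longrightarrow>
    (\<Prod>j\<in>I. enn_powr (x j) (\<theta> j)) \<le> (\<Prod>j\<in>I. enn_powr (y j) (\<theta> j))"
  by (intro prod_mono_ennreal) (simp add: enn_powr_mono)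

lemma enn_powr_power_base: "0 < p \<Longrightarrow> enn_powr (x ^ n) p = enn_powr x p ^ n"
  by (induction n) (simp_all add: enn_powr_mult)

lemma SUP_le_prod_enn_powr_SUP:
  fixes f :: "'a \<Rightarrow> ennreal" and G :: "'i \<Rightarrow> 'a \<Rightarrow> ennreal"
  assumes "\<And>i. i \<in> A \<Longrightarrow> f i \<le> c * (\<Prod>j\<in>I. enn_powr (G j i) (\<theta> j))"
    and "\<And>j. j \<in> I \<Longrightarrow> 0 \<le> \<theta> j"
  shows "(SUP i\<in>A. f i) \<le> c * (\<Prod>j\<in>I. enn_powr (SUP i\<in>A. G j i) (\<theta> j))"
proof (rule SUP_least)
  fix i assume "i \<in> A"
  then have "(\<Prod>j\<in>I. enn_powr (G j i) (\<theta> j)) \<le> (\<Prod>j\<in>I. enn_powr (SUP i\<in>A. G j i) (\<theta> j))"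
    using assms(2) by (intro prod_enn_powr_mono SUP_upper)
  then show "f i \<le> c * (\<Prod>j\<in>I. enn_powr (SUP i\<in>A. G j i) (\<theta> j))"
    using assms(1)[OF \<open>i \<in> A\<close>] by (metis mult_left_mono order_trans zero_le)
qed

section \<open>Hoelder's inequality for several factors\<close>

lemma weighted_arith_geom_mean:
  fixes z \<theta> :: "'a \<Rightarrow> real"
  assumes "finite I" and \<theta>: "\<And>j. j \<in> I \<Longrightarrow> 0 \<le> \<theta> j" "(\<Sum>j\<in>I. \<theta> j) = 1"
    and z: "\<And>j. j \<in> I \<Longrightarrow> 0 \<le> z j"
  shows "(\<Prod>j\<in>I. z j powr \<theta> j) \<le> (\<Sum>j\<in>I. \<theta> j * z j)"
proof (cases "\<exists>j\<in>I. z j = 0")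
  case True
  then have "(\<Prod>j\<in>I. z j powr \<theta> j) = 0" using \<open>finite I\<close> by auto
  then show ?thesis using \<theta> z by (simp add: sum_nonneg)
next
  case False
  with z have z_pos: "j \<in> I \<Longrightarrow> 0 < z j" for j by force
  have "I \<noteq> {}" using \<theta>(2) by auto
  have "(\<Sum>j\<in>I. \<theta> j * ln (z j)) \<le> ln (\<Sum>j\<in>I. \<theta> j *\<^sub>R z j)"
    by (rule concave_on_sum[OF \<open>finite I\<close> \<open>I \<noteq> {}\<close> ln_concave \<theta>(2)]) (simp_all add: \<theta>(1) z_pos)
  moreover have "0 < (\<Sum>j\<in>I. \<theta> j * z j)"
  proof -
    obtain i where "i \<in> I" "\<theta> i \<noteq> 0" using \<theta>(2) by (metis sum.neutral zero_neq_one)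
    then show ?thesis
      using \<open>finite I\<close> \<theta>(1) z_pos by (intro sum_pos2[of _ i]) (auto simp: less_le)
  qed
  ultimately have "exp (\<Sum>j\<in>I. \<theta> j * ln (z j)) \<le> (\<Sum>j\<in>I. \<theta> j * z j)"
    by (simp add: ln_ge_iff)
  moreover have "exp (\<Sum>j\<in>I. \<theta> j * ln (z j)) = (\<Prod>j\<in>I. z j powr \<theta> j)"
    using \<open>finite I\<close> z_pos
    by (simp add: exp_sum powr_def mult.commute less_imp_neq[symmetric] cong: prod.cong)
  ultimately show ?thesis by simp
qed

lemma prod_powr_le_weighted_sum:
  fixes x w \<theta> :: "'a \<Rightarrow> real"
  assumes "finite I" and \<theta>: "\<And>j. j \<in> I \<Longrightarrow> 0 \<le> \<theta> j" "(\<Sum>j\<in>I. \<theta> j) = 1"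
    and x: "\<And>j. j \<in> I \<Longrightarrow> 0 < x j" and w: "\<And>j. j \<in> I \<Longrightarrow> 0 \<le> w j"
  shows "(\<Prod>j\<in>I. w j powr \<theta> j) \<le> (\<Prod>j\<in>I. x j powr \<theta> j) * (\<Sum>j\<in>I. \<theta> j * (w j / x j))"
proof -
  have "x j powr \<theta> j * (w j / x j) powr \<theta> j = w j powr \<theta> j" if "j \<in> I" for j
    using x[OF that] w[OF that] by (simp add: powr_divide)
  then have "(\<Prod>j\<in>I. w j powr \<theta> j) = (\<Prod>j\<in>I. x j powr \<theta> j) * (\<Prod>j\<in>I. (w j / x j) powr \<theta> j)"
    unfolding prod.distrib[symmetric] by (intro prod.cong) simp_all
  also have "\<dots> \<le> (\<Prod>j\<in>I. x j powr \<theta> j) * (\<Sum>j\<in>I. \<theta> j * (w j / x j))"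
    using \<open>finite I\<close> \<theta> x w
    by (intro mult_left_mono weighted_arith_geom_mean prod_nonneg) (auto simp: less_imp_le)
  finally show ?thesis .
qed

lemma prod_enn_powr_le_weighted_sum:
  fixes x \<theta> :: "'a \<Rightarrow> real" and y :: "'a \<Rightarrow> ennreal"
  assumes "finite I" and \<theta>: "\<And>j. j \<in> I \<Longrightarrow> 0 < \<theta> j" "(\<Sum>j\<in>I. \<theta> j) = 1"
    and x: "\<And>j. j \<in> I \<Longrightarrow> 0 < x j"
  shows "(\<Prod>j\<in>I. enn_powr (y j) (\<theta> j))
    \<le> ennreal (\<Prod>j\<in>I. x j powr \<theta> j) * (\<Sum>j\<in>I. ennreal (\<theta> j / x j) * y j)"
proof (cases "\<exists>i\<in>I. y i = top")
  case True
  then obtain i where i: "i \<in> I" "y i = top" by blast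
  have "0 < \<theta> i" "0 < x i" using i(1) \<theta> x by auto
  then have "top = ennreal (\<theta> i / x i) * y i" using i(2) by (simp add: ennreal_mult_top)
  also have "\<dots> \<le> (\<Sum>j\<in>I. ennreal (\<theta> j / x j) * y j)"
    using \<open>finite I\<close> i(1) by (intro member_le_sum) simp_all
  finally have "(\<Sum>j\<in>I. ennreal (\<theta> j / x j) * y j) = top" by (simp add: top_unique)
  moreover have "0 < (\<Prod>j\<in>I. x j powr \<theta> j)" using x by (intro prod_pos) (simp add: less_imp_neq[symmetric])
  ultimately show ?thesis by (simp add: ennreal_mult_top)
next
  case False
  define w where "w j = enn2real (y j)" for j
  define S where "S = (\<Sum>j\<in>I. \<theta> j * (w j / x j))"
  have y: "y j = ennreal (w j)" "0 \<le> w j" if "j \<in> I" for j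
    using False that by (auto simp: w_def less_top)
  have "ennreal (\<theta> j * (w j / x j)) = ennreal (\<theta> j / x j) * y j" if "j \<in> I" for j
  proof -
    have "\<theta> j * (w j / x j) = \<theta> j / x j * w j" by simp
    then show ?thesis
      unfolding y(1)[OF that] using \<theta>(1)[OF that] x[OF that] y(2)[OF that]
      by (simp only:) (rule ennreal_mult; simp)
  qed
  moreover have "0 \<le> \<theta> j * (w j / x j)" if "j \<in> I" for j
    using \<theta>(1)[OF that] x[OF that] y(2)[OF that] by simp
  ultimately have ennreal_S: "ennreal S = (\<Sum>j\<in>I. ennreal (\<theta> j / x j) * y j)"
    unfolding S_def by (simp add: sum_ennreal[symmetric] cong: sum.cong)
  have "(\<Prod>j\<in>I. enn_powr (y j) (\<theta> j)) = ennreal (\<Prod>j\<in>I. w j powr \<theta> j)"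
    using y by (simp add: enn_powr_ennreal prod_ennreal cong: prod.cong)
  also have "\<dots> \<le> ennreal ((\<Prod>j\<in>I. x j powr \<theta> j) * S)"
    unfolding S_def using \<open>finite I\<close> \<theta> x y
    by (intro ennreal_leI prod_powr_le_weighted_sum) (auto simp: less_imp_le)
  also have "\<dots> = ennreal (\<Prod>j\<in>I. x j powr \<theta> j) * ennreal S"
    unfolding S_def using \<theta> x y
    by (intro ennreal_mult prod_nonneg sum_nonneg) (auto simp: less_imp_le)
  finally show ?thesis unfolding ennreal_S .
qed

theorem nn_integral_prod_enn_powr_le:
  fixes G :: "'i \<Rightarrow> 'a \<Rightarrow> ennreal" and \<theta> :: "'i \<Rightarrow> real"
  assumes "finite I" and \<theta>: "\<And>j. j \<in> I \<Longrightarrow> 0 < \<theta> j" "(\<Sum>j\<in>I. \<theta> j) = 1"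
    and G: "\<And>j. j \<in> I \<Longrightarrow> G j \<in> borel_measurable M"
  shows "(\<integral>\<^sup>+x. (\<Prod>j\<in>I. enn_powr (G j x) (\<theta> j)) \<partial>M) \<le> (\<Prod>j\<in>I. enn_powr (\<integral>\<^sup>+x. G j x \<partial>M) (\<theta> j))"
proof -
  define X where "X j = (\<integral>\<^sup>+x. G j x \<partial>M)" for j
  consider (zero) "\<exists>j\<in>I. X j = 0" | (infinite) "\<forall>j\<in>I. X j \<noteq> 0" "\<exists>j\<in>I. X j = top"
    | (finite) "\<forall>j\<in>I. X j \<noteq> 0 \<and> X j \<noteq> top" by blast
  then show ?thesis
  proof cases
    case zero
    then obtain i where i: "i \<in> I" "AE x in M. G i x = 0"
      using G by (auto simp: X_def nn_integral_0_iff_AE)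
    have "AE x in M. (\<Prod>j\<in>I. enn_powr (G j x) (\<theta> j)) = 0"
      using i(2) by (rule eventually_mono) (use \<open>finite I\<close> i(1) in \<open>auto intro!: prod_zero bexI[of _ i]\<close>)
    then have "(\<integral>\<^sup>+x. (\<Prod>j\<in>I. enn_powr (G j x) (\<theta> j)) \<partial>M) = (\<integral>\<^sup>+x. 0 \<partial>M)"
      by (rule nn_integral_cong_AE)
    then show ?thesis by simp
  next
    case infinite
    then have "(\<Prod>j\<in>I. enn_powr (X j) (\<theta> j)) = top"
      using \<open>finite I\<close> by (force simp: ennreal_prod_eq_top enn_powr_eq_0_iff)
    then show ?thesis by (simp add: X_def)
  next
    case finite
    \<comment> \<open>Apply Young's inequality with each factor normalised by its integral.\<close>
    define x where "x j = enn2real (X j)" for j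
    have X: "X j = ennreal (x j)" "0 < x j" if "j \<in> I" for j
      using finite that by (auto simp: x_def enn2real_positive_iff less_top zero_less_iff_neq_zero)
    have "(\<integral>\<^sup>+y. (\<Prod>j\<in>I. enn_powr (G j y) (\<theta> j)) \<partial>M)
        \<le> (\<integral>\<^sup>+y. ennreal (\<Prod>j\<in>I. x j powr \<theta> j) * (\<Sum>j\<in>I. ennreal (\<theta> j / x j) * G j y) \<partial>M)"
      using \<open>finite I\<close> \<theta> X by (intro nn_integral_mono prod_enn_powr_le_weighted_sum) auto
    also have "\<dots> = ennreal (\<Prod>j\<in>I. x j powr \<theta> j) * (\<Sum>j\<in>I. ennreal (\<theta> j / x j) * X j)"
      using G by (simp add: nn_integral_cmult nn_integral_sum X_def)
    also have "(\<Sum>j\<in>I. ennreal (\<theta> j / x j) * X j) = 1"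
      using \<theta> X by (simp add: ennreal_mult[symmetric] sum_ennreal less_imp_le less_imp_neq[symmetric] cong: sum.cong)
    also have "ennreal (\<Prod>j\<in>I. x j powr \<theta> j) = (\<Prod>j\<in>I. enn_powr (X j) (\<theta> j))"
      using X by (simp add: enn_powr_ennreal prod_ennreal less_imp_le cong: prod.cong)
    finally show ?thesis by (simp add: X_def)
  qed
qed

lemma area_int_mono: "(\<And>z. z \<in> unit_disc \<Longrightarrow> f z \<le> g z) \<Longrightarrow> area_int f \<le> area_int g"
  unfolding area_int_def
  by (intro divide_right_mono_ennreal nn_integral_mono) (simp split: split_indicator)

lemma area_int_cmult:
  "(\<lambda>z. f z * indicator unit_disc z) \<in> borel_measurable lborel \<Longrightarrow>
    area_int (\<lambda>z. c * f z) = c * area_int f"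
  unfolding area_int_def by (simp add: mult.assoc nn_integral_cmult ennreal_times_divide)

theorem area_int_prod_enn_powr_le:
  fixes G :: "'i \<Rightarrow> complex \<Rightarrow> ennreal" and \<theta> :: "'i \<Rightarrow> real"
  assumes "finite I" and \<theta>: "\<And>j. j \<in> I \<Longrightarrow> 0 < \<theta> j" "(\<Sum>j\<in>I. \<theta> j) = 1"
    and G: "\<And>j. j \<in> I \<Longrightarrow> (\<lambda>z. G j z * indicator unit_disc z) \<in> borel_measurable lborel"
  shows "area_int (\<lambda>z. \<Prod>j\<in>I. enn_powr (G j z) (\<theta> j)) \<le> (\<Prod>j\<in>I. enn_powr (area_int (G j)) (\<theta> j))"
proof -
  have "I \<noteq> {}" using \<theta>(2) by auto
  note weights = prod_enn_powr_mult_left[OF \<open>finite I\<close> \<open>I \<noteq> {}\<close> \<theta>]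
  have "(\<integral>\<^sup>+z. (\<Prod>j\<in>I. enn_powr (G j z) (\<theta> j)) * indicator unit_disc z \<partial>lborel)
      = (\<integral>\<^sup>+z. (\<Prod>j\<in>I. enn_powr (G j z * indicator unit_disc z) (\<theta> j)) \<partial>lborel)"
    by (simp add: mult.commute[where b = "indicator unit_disc _"] weights)
  also have "\<dots> \<le> (\<Prod>j\<in>I. enn_powr (\<integral>\<^sup>+z. G j z * indicator unit_disc z \<partial>lborel) (\<theta> j))"
    using \<open>finite I\<close> \<theta> G by (rule nn_integral_prod_enn_powr_le)
  finally have "area_int (\<lambda>z. \<Prod>j\<in>I. enn_powr (G j z) (\<theta> j))
      \<le> inverse (ennreal pi) * (\<Prod>j\<in>I. enn_powr (\<integral>\<^sup>+z. G j z * indicator unit_disc z \<partial>lborel) (\<theta> j))"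
    unfolding area_int_def divide_ennreal_def by (simp add: mult.commute mult_left_mono)
  also have "\<dots> = (\<Prod>j\<in>I. enn_powr (inverse (ennreal pi) * (\<integral>\<^sup>+z. G j z * indicator unit_disc z \<partial>lborel)) (\<theta> j))"
    by (rule weights[symmetric])
  also have "\<dots> = (\<Prod>j\<in>I. enn_powr (area_int (G j)) (\<theta> j))"
    unfolding area_int_def divide_ennreal_def by (simp add: mult.commute)
  finally show ?thesis .
qed

section \<open>The slope of a differentiable function\<close>

lemma Limsup_filter_mono:
  fixes f :: "'a \<Rightarrow> 'b::complete_lattice"
  assumes "F \<le> G" shows "Limsup F f \<le> Limsup G f"
  unfolding Limsup_def
proof (rule INF_mono)
  fix P assume "P \<in> {P. eventually P G}"
  then have "eventually P F" using assms by (simp add: filter_leD)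
  then show "\<exists>Q\<in>{P. eventually P F}. Sup (f ` Collect Q) \<le> Sup (f ` Collect P)" by blast
qed

lemma has_derivative_at_remainder:
  assumes "(\<psi> has_derivative L) (at z)"
  shows "((\<lambda>w. \<bar>\<psi> w - \<psi> z - L (w - z)\<bar> / cmod (w - z)) \<longlongrightarrow> 0) (at z)"
proof -
  have "((\<lambda>w. (\<psi> w - \<psi> z - L (w - z)) /\<^sub>R cmod (w - z)) \<longlongrightarrow> 0) (at z)"
    using assms unfolding has_derivative_at_within by simp
  then have "((\<lambda>w. norm ((\<psi> w - \<psi> z - L (w - z)) /\<^sub>R cmod (w - z))) \<longlongrightarrow> 0) (at z)"
    by (rule tendsto_norm_zero)
  then show ?thesis by (simp add: divide_inverse mult.commute abs_mult)
qed

lemma grad_abs_le_of_has_derivative: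
  fixes \<psi> :: "complex \<Rightarrow> real"
  assumes der: "(\<psi> has_derivative L) (at z)" and bound: "\<And>h. \<bar>L h\<bar> \<le> T * cmod h"
  shows "grad_abs \<psi> z \<le> ennreal T"
proof -
  define e where "e w = \<bar>\<psi> w - \<psi> z - L (w - z)\<bar> / cmod (w - z)" for w
  have pointwise: "\<bar>\<psi> w - \<psi> z\<bar> / cmod (w - z) \<le> T + e w" if "w \<noteq> z" for w
  proof -
    have "\<bar>\<psi> w - \<psi> z\<bar> \<le> T * cmod (w - z) + \<bar>\<psi> w - \<psi> z - L (w - z)\<bar>"
      using bound[of "w - z"] by linarith
    then have "\<bar>\<psi> w - \<psi> z\<bar> / cmod (w - z)
        \<le> (T * cmod (w - z) + \<bar>\<psi> w - \<psi> z - L (w - z)\<bar>) / cmod (w - z)"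
      by (rule divide_right_mono) simp
    then show ?thesis
      using that by (simp add: e_def add_divide_distrib)
  qed
  have "\<forall>\<^sub>F w in at z. w \<noteq> z" by (simp add: eventually_at_filter)
  then have "\<forall>\<^sub>F w in at z. ennreal (\<bar>\<psi> w - \<psi> z\<bar> / cmod (w - z)) \<le> ennreal (T + e w)"
    by (rule eventually_mono) (simp add: pointwise ennreal_leI)
  then have "grad_abs \<psi> z \<le> Limsup (at z) (\<lambda>w. ennreal (T + e w))"
    unfolding grad_abs_def by (rule Limsup_mono)
  also have "\<dots> = ennreal T"
    using has_derivative_at_remainder[OF der] unfolding e_def[symmetric]
    by (intro lim_imp_Limsup) (auto intro!: tendsto_ennrealI tendsto_eq_intros)
  finally show ?thesis .
qed

lemma grad_abs_ge_of_has_derivative: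
  fixes \<psi> :: "complex \<Rightarrow> real"
  assumes der: "(\<psi> has_derivative L) (at z)" and u: "cmod u = 1"
  shows "ennreal (L u) \<le> grad_abs \<psi> z"
proof -
  define e where "e w = \<bar>\<psi> w - \<psi> z - L (w - z)\<bar> / cmod (w - z)" for w
  define ray where "ray t = z + of_real t * u" for t :: real
  have "linear L" using der by (rule has_derivative_linear)
  have ray_lim: "filterlim ray (at z) (at_right 0)"
  proof -
    have "(ray \<longlongrightarrow> z) (at_right 0)" unfolding ray_def by (auto intro!: tendsto_eq_intros)
    moreover have "eventually (\<lambda>t. ray t \<noteq> z) (at_right 0)"
      using eventually_at_right_less[of 0] by (rule eventually_mono) (use u in \<open>auto simp: ray_def\<close>)
    ultimately show ?thesis by (simp add: filterlim_at)
  qed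
  have ray_le: "L u - e (ray t) \<le> \<bar>\<psi> (ray t) - \<psi> z\<bar> / cmod (ray t - z)" if "0 < t" for t
  proof -
    have "L (ray t - z) = t * L u"
      unfolding ray_def using linear_scale[OF \<open>linear L\<close>] by (simp add: scaleR_conv_of_real[symmetric])
    moreover have "cmod (ray t - z) = t" using u that by (simp add: ray_def norm_mult)
    ultimately show ?thesis using that
      by (simp add: e_def divide_simps add_divide_distrib mult.commute)
  qed
  have "((\<lambda>t. e (ray t)) \<longlongrightarrow> 0) (at_right 0)"
    using filterlim_compose[OF has_derivative_at_remainder[OF der] ray_lim] unfolding e_def .
  then have "ennreal (L u) = Limsup (at_right 0) (\<lambda>t. ennreal (L u - e (ray t)))"
    by (intro lim_imp_Limsup[symmetric]) (auto intro!: tendsto_ennrealI tendsto_eq_intros)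
  also have "\<dots> \<le> Limsup (at_right 0) (\<lambda>t. ennreal (\<bar>\<psi> (ray t) - \<psi> z\<bar> / cmod (ray t - z)))"
    by (intro Limsup_mono eventually_mono[OF eventually_at_right_less[of 0]]) (simp add: ray_le ennreal_leI)
  also have "\<dots> \<le> Limsup (filtermap ray (at_right 0)) (\<lambda>w. ennreal (\<bar>\<psi> w - \<psi> z\<bar> / cmod (w - z)))"
    by (rule Limsup_filtermap_ge)
  also have "\<dots> \<le> grad_abs \<psi> z"
    unfolding grad_abs_def using ray_lim by (intro Limsup_filter_mono) (simp add: filterlim_def)
  finally show ?thesis .
qed

theorem grad_abs_eq_norm_gradient:
  fixes \<psi> :: "complex \<Rightarrow> real"
  assumes der: "(\<psi> has_derivative (\<lambda>h. h \<bullet> v)) (at z)"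
  shows "grad_abs \<psi> z = ennreal (cmod v)"
proof (rule antisym)
  show "grad_abs \<psi> z \<le> ennreal (cmod v)"
    using der by (rule grad_abs_le_of_has_derivative) (simp add: Cauchy_Schwarz_ineq2 mult.commute)
  show "ennreal (cmod v) \<le> grad_abs \<psi> z"
  proof (cases "v = 0")
    case False
    have "sgn v \<bullet> v = cmod v"
      using False by (simp add: sgn_div_norm inner_commute[of _ v] power2_norm_eq_inner[symmetric] power2_eq_square)
    then show ?thesis
      using grad_abs_ge_of_has_derivative[OF der, of "sgn v"] False by (simp add: norm_sgn)
  qed simp
qed

section \<open>The slope of \<open>|g|\<^sup>s\<close> for holomorphic \<open>g\<close>\<close>

abbreviation ratio_exponent :: "nat \<Rightarrow> nat \<Rightarrow> real" where
  "ratio_exponent m n \<equiv> real m / real n + 1"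

text \<open>
  \<open>powr_slope m n |g z| |g' z|\<close> is the slope of \<open>|g|\<^bsup>m/n+1\<^esup>\<close> at \<open>z\<close>.  Writing
  \<open>(x ^ m) powr (1/n)\<close> rather than \<open>x powr (m/n)\<close> gives the right value \<open>1\<close> at
  \<open>x = 0, m = 0\<close>, where Isabelle's \<open>0 powr 0\<close> is \<open>0\<close>.
\<close>
definition powr_slope :: "nat \<Rightarrow> nat \<Rightarrow> real \<Rightarrow> real \<Rightarrow> real" where
  "powr_slope m n x d = ratio_exponent m n * (x ^ m) powr (1 / real n) * d"

lemma ratio_exponent_pos: "0 < ratio_exponent m n"
  by (simp add: add_nonneg_pos)

lemma powr_slope_nonneg: "0 \<le> d \<Longrightarrow> 0 \<le> powr_slope m n x d"
  by (simp add: powr_slope_def)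

lemma powr_slope_pos_base:
  "0 < x \<Longrightarrow> powr_slope m n x d = ratio_exponent m n * x powr (ratio_exponent m n - 1) * d"
  by (simp add: powr_slope_def powr_realpow[symmetric] powr_powr)

lemma grad_abs_norm_powr_nonzero:
  assumes der: "(g has_field_derivative c) (at z)" and nz: "g z \<noteq> 0"
  shows "grad_abs (\<lambda>w. cmod (g w) powr ratio_exponent m n) z
    = ennreal (powr_slope m n (cmod (g z)) (cmod c))"
proof -
  define q where "q = ratio_exponent m n"
  define a where "a = cmod (g z)"
  define v where "v = (q * a powr (q - 1)) *\<^sub>R (cnj c * sgn (g z))"
  have a: "0 < a" using nz by (simp add: a_def)
  have "(g has_derivative (*) c) (at z)"
    using der by (simp add: has_field_derivative_def)
  from has_derivative_compose[OF this has_derivative_norm[OF nz]]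
  have "((\<lambda>w. cmod (g w)) has_derivative (\<lambda>h. (c * h) \<bullet> sgn (g z))) (at z)" .
  then have "((\<lambda>w. cmod (g w) powr q) has_derivative
      (\<lambda>h. a powr q * (0 * ln a + (c * h) \<bullet> sgn (g z) * q / a))) (at z)"
    using a unfolding a_def by (intro has_derivative_powr has_derivative_const) auto
  moreover have "a powr q * (0 * ln a + (c * h) \<bullet> sgn (g z) * q / a) = h \<bullet> v" for h
  proof -
    have "(c * h) \<bullet> sgn (g z) = h \<bullet> (cnj c * sgn (g z))"
      by (simp add: inner_complex_def algebra_simps)
    then have "a powr q * (0 * ln a + (c * h) \<bullet> sgn (g z) * q / a)
        = q * (a powr q / a) * (h \<bullet> (cnj c * sgn (g z)))"
      by (simp add: divide_inverse mult_ac)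
    also have "a powr q / a = a powr (q - 1)" using a by (simp add: powr_diff)
    finally show ?thesis by (simp add: v_def)
  qed
  ultimately have "((\<lambda>w. cmod (g w) powr q) has_derivative (\<lambda>h. h \<bullet> v)) (at z)" by simp
  then have "grad_abs (\<lambda>w. cmod (g w) powr q) z = ennreal (cmod v)"
    by (rule grad_abs_eq_norm_gradient)
  also have "cmod v = q * a powr (q - 1) * cmod c"
    using nz by (simp add: v_def norm_mult norm_sgn q_def)
  finally show ?thesis using a by (simp add: powr_slope_pos_base q_def a_def)
qed

text \<open>At a zero of \<open>g\<close> the function \<open>|g|\<^sup>s\<close> need not be differentiable (take \<open>s = 1\<close>),
  but its difference quotient converges.\<close>
lemma grad_abs_norm_powr_zero:
  assumes der: "(g has_field_derivative c) (at z)" and zero: "g z = 0" and n: "0 < n"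
  shows "grad_abs (\<lambda>w. cmod (g w) powr ratio_exponent m n) z
    = ennreal (powr_slope m n (cmod (g z)) (cmod c))"
proof -
  define q where "q = ratio_exponent m n"
  have quotient: "((\<lambda>w. cmod ((g w - g z) / (w - z))) \<longlongrightarrow> cmod c) (at z)"
    using der unfolding has_field_derivative_iff by (rule tendsto_norm)
  have "((\<lambda>w. \<bar>cmod (g w) powr q - cmod (g z) powr q\<bar> / cmod (w - z))
      \<longlongrightarrow> powr_slope m n (cmod (g z)) (cmod c)) (at z)"
  proof (cases "m = 0")
    case True
    then show ?thesis using quotient zero by (simp add: q_def powr_slope_def norm_divide)
  next
    case False
    have "(g \<longlongrightarrow> g z) (at z)" using der DERIV_isCont isCont_def by blast
    then have "((\<lambda>w. cmod (g w) powr (real m / real n)) \<longlongrightarrow> 0) (at z)"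
      using False n zero by (auto intro!: tendsto_eq_intros tendsto_powr'[where a = 0, simplified])
    then have "((\<lambda>w. cmod (g w) powr (real m / real n) * cmod ((g w - g z) / (w - z))) \<longlongrightarrow> 0 * cmod c) (at z)"
      using quotient by (rule tendsto_mult)
    moreover have "\<bar>cmod (g w) powr q - cmod (g z) powr q\<bar> / cmod (w - z)
        = cmod (g w) powr (real m / real n) * cmod ((g w - g z) / (w - z))" for w
      using zero by (simp add: q_def powr_add norm_divide)
    ultimately show ?thesis using zero False by (simp add: powr_slope_def power_0_left)
  qed
  then show ?thesis unfolding grad_abs_def q_def
    by (intro lim_imp_Limsup tendsto_ennrealI) simp_all
qed

theorem grad_abs_norm_powr:
  assumes "(g has_field_derivative c) (at z)" and "0 < n"
  shows "grad_abs (\<lambda>w. cmod (g w) powr ratio_exponent m n) z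
    = ennreal (powr_slope m n (cmod (g z)) (cmod c))"
  using assms grad_abs_norm_powr_nonzero grad_abs_norm_powr_zero by blast

lemma mobius_denominator_nonzero:
  assumes "a \<in> unit_disc" "z \<in> unit_disc" shows "1 - cnj a * z \<noteq> 0"
proof
  assume "1 - cnj a * z = 0"
  then have "cmod (cnj a * z) = 1" by (metis eq_iff_diff_eq_0 norm_one)
  moreover have "cmod (cnj a * z) < 1"
    using assms by (simp add: norm_mult) (metis mult_strict_mono' norm_ge_zero mult_1_right less_le_trans order_refl)
  ultimately show False by simp
qed

lemma borel_measurable_bmoa_integrand:
  assumes holo: "g holomorphic_on unit_disc" and a: "a \<in> unit_disc" and n: "0 < n"
  shows "(\<lambda>z. ennreal (1 - (cmod (mobius a z))\<^sup>2)
      * (grad_abs (\<lambda>w. cmod (g w) powr ratio_exponent m n) z)\<^sup>2 * indicator unit_disc z)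
    \<in> borel_measurable lborel"
proof -
  define f where "f z = max 0 (1 - (cmod (mobius a z))\<^sup>2) * powr_slope m n (cmod (g z)) (cmod (deriv g z)) ^ 2" for z
  have weight: "continuous_on unit_disc (\<lambda>z. max 0 (1 - (cmod (mobius a z))\<^sup>2))"
    unfolding mobius_def using mobius_denominator_nonzero[OF a] by (intro continuous_intros) auto
  have slope: "continuous_on unit_disc (\<lambda>z. powr_slope m n (cmod (g z)) (cmod (deriv g z)))"
    unfolding powr_slope_def using n
    by (intro continuous_intros continuous_on_powr' holomorphic_on_imp_continuous_on holo
        holomorphic_deriv) auto
  have "continuous_on unit_disc f"
    unfolding f_def by (rule continuous_on_mult[OF weight continuous_on_power[OF slope]])
  then have "(\<lambda>z. indicator unit_disc z *\<^sub>R f z) \<in> borel_measurable borel"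
    by (intro borel_measurable_continuous_on_indicator) auto
  then have "(\<lambda>z. ennreal (indicator unit_disc z *\<^sub>R f z)) \<in> borel_measurable lborel"
    by (intro measurable_compose[OF _ measurable_ennreal]) simp
  moreover have "ennreal (indicator unit_disc z *\<^sub>R f z)
      = ennreal (1 - (cmod (mobius a z))\<^sup>2)
        * (grad_abs (\<lambda>w. cmod (g w) powr ratio_exponent m n) z)\<^sup>2 * indicator unit_disc z" for z
  proof (cases "z \<in> unit_disc")
    case True
    then have "grad_abs (\<lambda>w. cmod (g w) powr ratio_exponent m n) z
        = ennreal (powr_slope m n (cmod (g z)) (cmod (deriv g z)))"
      using n by (intro grad_abs_norm_powr holomorphic_derivI[OF holo]) auto
    then show ?thesis
      using True by (simp add: f_def ennreal_mult ennreal_power powr_slope_nonneg ennreal_max_0)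
  qed simp
  ultimately show ?thesis by simp
qed

section \<open>Splitting the exponent\<close>

lemma power_powr_commute:
  fixes x a :: real
  shows "0 \<le> x \<Longrightarrow> (x ^ k) powr a = (x powr a) ^ k"
  using powr_powr[of x "real k" a] powr_power[of x a k] powr_realpow[of x k]
  by (cases "x = 0") (simp_all add: power_0_left mult.commute)

lemma enn_powr_ratio_exponent_power:
  assumes "0 < n" "0 < e"
  shows "enn_powr x (1 / (e * ratio_exponent m n)) ^ (m + n) = enn_powr x (real n / e)"
proof -
  define s where "s = ratio_exponent m n"
  have "real (m + n) = s * real n" "0 < s"
    using assms(1) ratio_exponent_pos[of m n] by (simp_all add: s_def field_simps)
  then have "1 / (e * s) * real (m + n) = real n / e"
    using assms(2) by simp
  then show ?thesis using assms by (simp add: enn_powr_power s_def)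
qed

locale exponent_partition =
  fixes I :: "'i set" and m n :: "'i \<Rightarrow> nat"
  assumes finite_I: "finite I" and nonempty_I: "I \<noteq> {}" and n_pos: "\<And>j. j \<in> I \<Longrightarrow> 0 < n j"
begin

abbreviation M :: nat where "M \<equiv> \<Sum>j\<in>I. m j"
abbreviation N :: nat where "N \<equiv> \<Sum>j\<in>I. n j"
abbreviation \<theta> :: "'i \<Rightarrow> real" where "\<theta> j \<equiv> real (n j) / real N"

declare of_nat_sum [simp del]

definition split_const :: real where
  "split_const = ratio_exponent M N / (\<Prod>j\<in>I. ratio_exponent (m j) (n j) powr \<theta> j)"

lemma N_pos: "0 < N"
proof -
  obtain j where "j \<in> I" using nonempty_I by blast
  then have "n j \<le> N" using finite_I by (intro member_le_sum) auto
  with n_pos[OF \<open>j \<in> I\<close>] show ?thesis by linarith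
qed

lemma \<theta>_pos: "j \<in> I \<Longrightarrow> 0 < \<theta> j"
  using n_pos N_pos by simp

lemma sum_\<theta>: "(\<Sum>j\<in>I. \<theta> j) = 1"
proof -
  have "(\<Sum>j\<in>I. \<theta> j) = real N / real N"
    by (simp add: sum_divide_distrib[symmetric] of_nat_sum)
  then show ?thesis using N_pos by simp
qed

lemma split_const_pos: "0 < split_const"
  unfolding split_const_def by (intro divide_pos_pos prod_pos) (simp_all add: ratio_exponent_pos less_imp_neq[symmetric])

lemma prod_powr_\<theta>: "0 \<le> d \<Longrightarrow> (\<Prod>j\<in>I. d powr \<theta> j) = d"
  using finite_I nonempty_I sum_\<theta> by (cases "d = 0") (simp_all add: powr_sum[symmetric] card_gt_0_iff)

lemmas prod_enn_powr_\<theta>_mult_left = prod_enn_powr_mult_left[OF finite_I nonempty_I \<theta>_pos sum_\<theta>]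

lemma powr_slope_split:
  assumes "0 \<le> x" "0 \<le> d"
  shows "powr_slope M N x d = split_const * (\<Prod>j\<in>I. powr_slope (m j) (n j) x d powr \<theta> j)"
proof -
  define r where "r = x powr (1 / real N)"
  have root: "(x ^ k) powr (1 / real N) = r ^ k" for k
    using assms(1) by (simp add: r_def power_powr_commute)
  have "powr_slope (m j) (n j) x d powr \<theta> j = ratio_exponent (m j) (n j) powr \<theta> j * r ^ m j * d powr \<theta> j"
    if "j \<in> I" for j
  proof -
    have "((x ^ m j) powr (1 / real (n j))) powr \<theta> j = (x ^ m j) powr (1 / real N)"
      using n_pos[OF that] by (simp add: powr_powr)
    then show ?thesis
      using assms by (simp add: powr_slope_def powr_mult root)
  qed
  then have "(\<Prod>j\<in>I. powr_slope (m j) (n j) x d powr \<theta> j)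
      = (\<Prod>j\<in>I. ratio_exponent (m j) (n j) powr \<theta> j) * r ^ M * d"
    using assms(2) by (simp add: prod.distrib power_sum prod_powr_\<theta>)
  moreover have "split_const * (\<Prod>j\<in>I. ratio_exponent (m j) (n j) powr \<theta> j) = ratio_exponent M N"
    unfolding split_const_def by (simp add: prod_pos ratio_exponent_pos less_imp_neq[symmetric])
  ultimately show ?thesis by (simp add: powr_slope_def root)
qed

lemma grad_abs_split:
  assumes "(g has_field_derivative c) (at z)"
  shows "grad_abs (\<lambda>w. cmod (g w) powr ratio_exponent M N) z
    = ennreal split_const * (\<Prod>j\<in>I. enn_powr (grad_abs (\<lambda>w. cmod (g w) powr ratio_exponent (m j) (n j)) z) (\<theta> j))"
proof -
  have "(\<Prod>j\<in>I. enn_powr (grad_abs (\<lambda>w. cmod (g w) powr ratio_exponent (m j) (n j)) z) (\<theta> j))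
      = ennreal (\<Prod>j\<in>I. powr_slope (m j) (n j) (cmod (g z)) (cmod c) powr \<theta> j)"
    using assms n_pos
    by (simp add: grad_abs_norm_powr enn_powr_ennreal powr_slope_nonneg prod_ennreal cong: prod.cong)
  then show ?thesis
    using assms N_pos split_const_pos
    by (simp add: grad_abs_norm_powr powr_slope_split ennreal_mult prod_nonneg)
qed

lemma bloch_q_pow_split_le:
  assumes "g holomorphic_on unit_disc"
  shows "bloch_q_pow (ratio_exponent M N) g
    \<le> ennreal split_const * (\<Prod>j\<in>I. enn_powr (bloch_q_pow (ratio_exponent (m j) (n j)) g) (\<theta> j))"
  unfolding bloch_q_pow_def
proof (rule SUP_le_prod_enn_powr_SUP)
  fix z assume "z \<in> unit_disc"
  with assms have "(g has_field_derivative deriv g z) (at z)" by (intro holomorphic_derivI) auto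
  then show "ennreal (1 - (cmod z)\<^sup>2) * grad_abs (\<lambda>w. cmod (g w) powr ratio_exponent M N) z
      \<le> ennreal split_const * (\<Prod>j\<in>I. enn_powr (ennreal (1 - (cmod z)\<^sup>2)
          * grad_abs (\<lambda>w. cmod (g w) powr ratio_exponent (m j) (n j)) z) (\<theta> j))"
    by (simp add: grad_abs_split prod_enn_powr_\<theta>_mult_left mult.left_commute)
qed (simp add: less_imp_le \<theta>_pos)

lemma bmoa_integral_split_le:
  assumes holo: "g holomorphic_on unit_disc" and a: "a \<in> unit_disc"
  shows "area_int (\<lambda>z. ennreal (1 - (cmod (mobius a z))\<^sup>2)
      * (grad_abs (\<lambda>w. cmod (g w) powr ratio_exponent M N) z)\<^sup>2)
    \<le> ennreal (split_const ^ 2) * (\<Prod>j\<in>I. enn_powr (area_int (\<lambda>z. ennreal (1 - (cmod (mobius a z))\<^sup>2)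
      * (grad_abs (\<lambda>w. cmod (g w) powr ratio_exponent (m j) (n j)) z)\<^sup>2)) (\<theta> j))"
proof -
  define W where "W z = ennreal (1 - (cmod (mobius a z))\<^sup>2)" for z
  define G where "G j = (\<lambda>z. W z * (grad_abs (\<lambda>w. cmod (g w) powr ratio_exponent (m j) (n j)) z)\<^sup>2)" for j
  define c where "c = ennreal (split_const ^ 2)"
  have pointwise: "W z * (grad_abs (\<lambda>w. cmod (g w) powr ratio_exponent M N) z)\<^sup>2
      \<le> (\<Prod>j\<in>I. enn_powr (c * G j z) (\<theta> j))" if "z \<in> unit_disc" for z
  proof -
    from holo that have "(g has_field_derivative deriv g z) (at z)" by (intro holomorphic_derivI) auto
    then show ?thesis
      using split_const_pos \<theta>_pos
      by (simp add: grad_abs_split c_def G_def power_mult_distrib prod_power_distrib[symmetric]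
          enn_powr_power_base ennreal_power prod_enn_powr_\<theta>_mult_left mult_ac cong: prod.cong)
  qed
  have measurable: "(\<lambda>z. G j z * indicator unit_disc z) \<in> borel_measurable lborel" if "j \<in> I" for j
    unfolding G_def W_def using holo a n_pos[OF that] by (rule borel_measurable_bmoa_integrand)
  have "area_int (\<lambda>z. W z * (grad_abs (\<lambda>w. cmod (g w) powr ratio_exponent M N) z)\<^sup>2)
      \<le> area_int (\<lambda>z. \<Prod>j\<in>I. enn_powr (c * G j z) (\<theta> j))"
    using pointwise by (rule area_int_mono)
  also have "\<dots> \<le> (\<Prod>j\<in>I. enn_powr (area_int (\<lambda>z. c * G j z)) (\<theta> j))"
    using finite_I \<theta>_pos sum_\<theta>
  proof (rule area_int_prod_enn_powr_le)
    fix j assume "j \<in> I"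
    then show "(\<lambda>z. c * G j z * indicator unit_disc z) \<in> borel_measurable lborel"
      unfolding mult.assoc by (intro borel_measurable_times_ennreal borel_measurable_const measurable)
  qed
  also have "\<dots> = (\<Prod>j\<in>I. enn_powr (c * area_int (G j)) (\<theta> j))"
    using measurable by (intro prod.cong refl) (simp add: area_int_cmult)
  also have "\<dots> = c * (\<Prod>j\<in>I. enn_powr (area_int (G j)) (\<theta> j))"
    by (rule prod_enn_powr_\<theta>_mult_left)
  finally show ?thesis by (simp add: W_def G_def c_def)
qed

lemma bmoa_q_pow_split_le:
  assumes "g holomorphic_on unit_disc"
  shows "bmoa_q_pow (ratio_exponent M N) g
    \<le> ennreal (split_const ^ 2) * (\<Prod>j\<in>I. enn_powr (bmoa_q_pow (ratio_exponent (m j) (n j)) g) (\<theta> j))"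
  unfolding bmoa_q_pow_def
  by (rule SUP_le_prod_enn_powr_SUP[OF bmoa_integral_split_le[OF assms]]) (simp_all add: less_imp_le \<theta>_pos)

lemma norm_power_le_of_pow_le:
  fixes P :: "real \<Rightarrow> ennreal" and e :: nat
  assumes e: "0 < e"
    and P: "P (ratio_exponent M N)
      \<le> ennreal (split_const ^ e) * (\<Prod>j\<in>I. enn_powr (P (ratio_exponent (m j) (n j))) (\<theta> j))"
  shows "enn_powr (P (ratio_exponent M N)) (1 / (real e * ratio_exponent M N)) ^ (M + N)
    \<le> ennreal (split_const ^ N)
      * (\<Prod>j\<in>I. enn_powr (P (ratio_exponent (m j) (n j))) (1 / (real e * ratio_exponent (m j) (n j))) ^ (m j + n j))"
proof -
  have exponent: "0 < real N / real e" using N_pos e by simp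
  have "enn_powr (P (ratio_exponent M N)) (1 / (real e * ratio_exponent M N)) ^ (M + N)
      = enn_powr (P (ratio_exponent M N)) (real N / real e)"
    using N_pos e by (simp add: enn_powr_ratio_exponent_power)
  also have "\<dots> \<le> enn_powr (ennreal (split_const ^ e)
      * (\<Prod>j\<in>I. enn_powr (P (ratio_exponent (m j) (n j))) (\<theta> j))) (real N / real e)"
    using P exponent by (intro enn_powr_mono) simp_all
  also have "\<dots> = ennreal (split_const ^ N)
      * (\<Prod>j\<in>I. enn_powr (P (ratio_exponent (m j) (n j))) (real (n j) / real e))"
  proof -
    have "(split_const ^ e) powr (real N / real e) = split_const ^ N"
      using split_const_pos e by (simp add: powr_realpow[symmetric] powr_powr)
    moreover have "enn_powr (enn_powr x (\<theta> j)) (real N / real e) = enn_powr x (real (n j) / real e)" for x j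
      using N_pos by (simp add: enn_powr_powr)
    ultimately show ?thesis
      using exponent split_const_pos by (simp add: enn_powr_mult enn_powr_prod enn_powr_ennreal)
  qed
  also have "\<dots> = ennreal (split_const ^ N)
      * (\<Prod>j\<in>I. enn_powr (P (ratio_exponent (m j) (n j))) (1 / (real e * ratio_exponent (m j) (n j))) ^ (m j + n j))"
    using n_pos e by (simp add: enn_powr_ratio_exponent_power cong: prod.cong)
  finally show ?thesis .
qed

lemma B_alpha_norm_split_le:
  assumes "g holomorphic_on unit_disc"
  shows "B_alpha_norm \<alpha> (ratio_exponent M N) g ^ (M + N)
    \<le> ennreal (split_const ^ N) * (\<Prod>j\<in>I. B_alpha_norm \<alpha> (ratio_exponent (m j) (n j)) g ^ (m j + n j))"
proof (cases "\<alpha> = -1")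
  case True
  then show ?thesis
    using norm_power_le_of_pow_le[of 2 "\<lambda>q. bmoa_q_pow q g"] bmoa_q_pow_split_le[OF assms]
    by (simp add: B_alpha_norm_def bmoa_q_norm_def)
next
  case False
  then show ?thesis
    using norm_power_le_of_pow_le[of 1 "\<lambda>q. bloch_q_pow q g"] bloch_q_pow_split_le[OF assms]
    by (simp add: B_alpha_norm_def bloch_q_norm_def)
qed

end

theorem corollary1p2:
  fixes \<alpha> :: real and k :: nat and mm nn :: "nat \<Rightarrow> nat"
  assumes "\<alpha> \<ge> -1"
    and "\<forall>j\<in>{1..k}. nn j \<ge> 1"
    and "(\<Sum>j=1..k. mm j) \<ge> 1"
    and "(\<Sum>j=1..k. nn j) \<ge> 1"
  shows "\<exists>C::real. C > 0 \<and>
    (\<forall>g. g holomorphic_on unit_disc \<longrightarrow>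
      B_alpha_norm \<alpha> (real (\<Sum>j=1..k. mm j) / real (\<Sum>j=1..k. nn j) + 1) g
          ^ ((\<Sum>j=1..k. mm j) + (\<Sum>j=1..k. nn j))
      \<le> ennreal C * (\<Prod>j=1..k. B_alpha_norm \<alpha> (real (mm j) / real (nn j) + 1) g ^ (mm j + nn j)))"
proof -
  have "{1..k} \<noteq> {}"
  proof
    assume "{1..k} = {}"
    then show False using assms(4) by simp
  qed
  then interpret exponent_partition "{1..k}" mm nn
    using assms(2) by unfold_locales (auto simp: Suc_le_eq)
  show ?thesis
    using split_const_pos B_alpha_norm_split_le by (intro exI[of _ "split_const ^ N"]) auto
qed

end
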